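(* In the setting of the context, let $0<\rho<1$ satisfy $f_r([-1,1])\subset[-\rho,\rho]$ for all $r\in C$, and define \[ E_C=\frac1{1-\rho}\Big(\max_{r\in C}\frac{|f_r^\top(0)|}{1+\sqrt{1-|f_r^\top(0)|^2}}\Big)\Big(\sum_{r\in C}\pi_r\,d_{\mathrm{hyp}}(f_r(0),0)\Big). \] Then for every $n\in\mathbb N$, \[ \Big|\sum_{k=0}^\infty[\mathrm T^k\boldsymbol v]_{\boldsymbol 0}-\sum_{k=0}^{n-1}[\mathrm T^k\boldsymbol v]_{\boldsymbol 0}\Big|\le E_C\,\rho^{n-1}. \]
   Context: Setting (construction of the paper): $X$ finite, $P$ irreducible row-stochastic, $\Sigma=\{x\in X^{\mathbb N_0}:P_{x_nx_{n+1}}>0\}$, $\{A_i\}_{i\in X}\subset\mathrm{GL}_2(\mathbb R)$ projectively uniformly hyperbolic w.r.t. $\Sigma$ (continuous invariant splitting $\mathbb R^2=E^d\oplus E^w$ into lines over $\widehat\Sigma=\{(x_n)_{n\in\mathbb Z}:P_{x_nx_{n+1}}>0\}$, $A_{x_0}E^*(\hat x)=E^*(\widehat\sigma\hat x)$, with $\|A_{x_{n-1}}\cdots A_{x_0}|_{E^w}\|<\|A_{x_{n-1}}\cdots A_{x_0}|_{E^d}\|$ for some $n$). A multicone $\{M_i\}$ is fixed (non-empty proper finite unions of open intervals in $\mathbb{RP}^1$, $\overline{[A_j](M_i)}\subset M_j$ when $P_{ij}>0$), components $M_{i,a}$; $\beta(i,a,j)$ the unique $b$ with $[A_j](\overline{M_{i,a}})\subset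 M_{j,b}$; $R=\{((i,a),(j,b)):P_{ij}>0,\ b=\beta(i,a,j)\}$, $s(r)=(i,a)$, $t(r)=(j,b)$, $\tau(r)=j$; $Q_{r,r'}=P_{\tau(r)\tau(r')}$ if $t(r)=s(r')$ else $0$; $C$ a fixed recurrent class. $L_{i,a}$ maps the projective non-negative cone onto $\overline{M_{i,a}}$; $B_r=\pm L_{t(r)}^{-1}A_{\tau(r)}L_{s(r)}$ entrywise positive. If the period of $Q|_C$ is $d>1$, $C,Q,B$ are replaced by the $d$-step system on words through the cyclic classes ($Q_{c,c'}=Q_{c_{d-1}c'_0}Q_{c'_0c'_1}\cdots Q_{c'_{d-2}c'_{d-1}}$, $B_c=B_{c_{d-1}}\cdots B_{c_0}$), keeping names; $\pi$ is the stationary vector of the resulting irreducible aperiodic $Q|_C$. Möbius data: for $B_r=\begin{pmatrix}a_r&b_r\\c_r&d_r\end{pmatrix}$, $\alpha_r=\frac12(a_r-b_r-c_r+d_r)$, $\beta_r=\frac12(a_r+b_r-c_r-d_r)$, $\gamma_r=\frac12(a_r-b_r+c_r-d_r)$, $\delta_r=\frac12(a_r+b_r+c_r+d_r)$; $f_r(x)=\frac{\alpha_rx+\beta_r}{\gamma_rx+\delta_r}$, $f_r^\top(x)=\frac{\alpha_rx+\gamma_r}{\beta_rx+\delta_r}$, $\ell_r(x)=\mathrm{Log}(\gamma_rx+\delta_r)$; $d_{\mathrm{hyp}}(x,y)=2|\mathrm{artanh}\,x-\mathrm{artanh}\,y|$ on $(-1,1)$. Operators: $b^{(r)}_{k,0}=0$,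 $b^{(r)}_{0,n}=(f_r^\top(0))^n$ ($n\ge1$), $b^{(r)}_{k,n}=\sum_{\ell=1}^{\min\{k,n\}}\binom n\ell\binom{k-1}{\ell-1}(f_r^\top(0))^{n-\ell}(-f_r(0))^{k-\ell}(f_r'(0))^\ell$ ($k,n\ge1$); $v(x;c)\in\ell^\infty(\mathbb N_0)$ has entry $c$ at $0$ and $-(-x)^n/n$ at $n\ge1$; $V$ their span; $(T_ru)_k=\sum_nb^{(r)}_{k,n}u_n$; on $V_C=\bigoplus_{r\in C}V$, $(\mathrm T\boldsymbol u)_{r'}=\sum_r\frac{\pi_rQ_{r,r'}}{\pi_{r'}}T_ru_r$; seed $\boldsymbol v_s=\sum_r\frac{\pi_rQ_{r,s}}{\pi_s}v(f_r(0);\ell_r(0))$; $[\boldsymbol w]_{\boldsymbol 0}=\sum_r\pi_r(w_r)_0$. *)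

theory Defs
  imports "HOL-Analysis.Analysis"
begin

fun Qpow :: "'r set \<Rightarrow> ('r \<Rightarrow> 'r \<Rightarrow> real) \<Rightarrow> nat \<Rightarrow> 'r \<Rightarrow> 'r \<Rightarrow> real" where
  "Qpow C Q 0 r r' = (if r = r' then 1 else 0)"
| "Qpow C Q (Suc n) r r' = (\<Sum>s\<in>C. Qpow C Q n r s * Q s r')"

definition irreducible_on :: "'r set \<Rightarrow> ('r \<Rightarrow> 'r \<Rightarrow> real) \<Rightarrow> bool" where
  "irreducible_on C Q \<longleftrightarrow> (\<forall>r\<in>C. \<forall>r'\<in>C. \<exists>n>0. Qpow C Q n r r' > 0)"

definition aperiodic_on :: "'r set \<Rightarrow> ('r \<Rightarrow> 'r \<Rightarrow> real) \<Rightarrow> bool" where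
  "aperiodic_on C Q \<longleftrightarrow> (\<forall>r\<in>C. Gcd {n. n > 0 \<and> Qpow C Q n r r > 0} = 1)"

definition mob_alpha :: "real^2^2 \<Rightarrow> real" where
  "mob_alpha B = (B$1$1 - B$1$2 - B$2$1 + B$2$2) / 2"
definition mob_beta :: "real^2^2 \<Rightarrow> real" where
  "mob_beta B = (B$1$1 + B$1$2 - B$2$1 - B$2$2) / 2"
definition mob_gamma :: "real^2^2 \<Rightarrow> real" where
  "mob_gamma B = (B$1$1 - B$1$2 + B$2$1 - B$2$2) / 2"
definition mob_delta :: "real^2^2 \<Rightarrow> real" where
  "mob_delta B = (B$1$1 + B$1$2 + B$2$1 + B$2$2) / 2"

definition mob_f :: "real^2^2 \<Rightarrow> real \<Rightarrow> real" where
  "mob_f B x = (mob_alpha B * x + mob_beta B) / (mob_gamma B * x + mob_delta B)"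
definition mob_fT :: "real^2^2 \<Rightarrow> real \<Rightarrow> real" where
  "mob_fT B x = (mob_alpha B * x + mob_gamma B) / (mob_beta B * x + mob_delta B)"
definition mob_ell :: "real^2^2 \<Rightarrow> real \<Rightarrow> real" where
  "mob_ell B x = ln (mob_gamma B * x + mob_delta B)"

definition d_hyp :: "real \<Rightarrow> real \<Rightarrow> real" where
  "d_hyp x y = 2 * \<bar>artanh x - artanh y\<bar>"

definition bcoef :: "real^2^2 \<Rightarrow> nat \<Rightarrow> nat \<Rightarrow> real" where
  "bcoef B k n =
     (if n = 0 then 0
      else if k = 0 then (mob_fT B 0) ^ n
      else (\<Sum>l=1..min k n. real (n choose l) * real ((k - 1) choose (l - 1))
              * (mob_fT B 0) ^ (n - l) * (- mob_f B 0) ^ (k - l)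
              * (deriv (mob_f B) 0) ^ l))"

definition vseq :: "real \<Rightarrow> real \<Rightarrow> nat \<Rightarrow> real" where
  "vseq x c n = (if n = 0 then c else - ((- x) ^ n) / real n)"

definition Top :: "real^2^2 \<Rightarrow> (nat \<Rightarrow> real) \<Rightarrow> nat \<Rightarrow> real" where
  "Top B u k = (\<Sum>n. bcoef B k n * u n)"

definition TT :: "'r set \<Rightarrow> ('r \<Rightarrow> 'r \<Rightarrow> real) \<Rightarrow> ('r \<Rightarrow> real) \<Rightarrow> ('r \<Rightarrow> real^2^2)
                  \<Rightarrow> ('r \<Rightarrow> nat \<Rightarrow> real) \<Rightarrow> 'r \<Rightarrow> nat \<Rightarrow> real" where
  "TT C Q p B u r' = (\<lambda>k. \<Sum>r\<in>C. p r * Q r r' / p r' * Top (B r) (u r) k)"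

definition seed :: "'r set \<Rightarrow> ('r \<Rightarrow> 'r \<Rightarrow> real) \<Rightarrow> ('r \<Rightarrow> real) \<Rightarrow> ('r \<Rightarrow> real^2^2)
                  \<Rightarrow> 'r \<Rightarrow> nat \<Rightarrow> real" where
  "seed C Q p B s = (\<lambda>k. \<Sum>r\<in>C. p r * Q r s / p s
                           * vseq (mob_f (B r) 0) (mob_ell (B r) 0) k)"

definition bracket0 :: "'r set \<Rightarrow> ('r \<Rightarrow> real) \<Rightarrow> ('r \<Rightarrow> nat \<Rightarrow> real) \<Rightarrow> real" where
  "bracket0 C p w = (\<Sum>r\<in>C. p r * w r 0)"

definition E_C :: "'r set \<Rightarrow> ('r \<Rightarrow> real) \<Rightarrow> ('r \<Rightarrow> real^2^2) \<Rightarrow> real \<Rightarrow> real" where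
  "E_C C p B \<rho> = 1 / (1 - \<rho>)
     * Max ((\<lambda>r. \<bar>mob_fT (B r) 0\<bar> / (1 + sqrt (1 - \<bar>mob_fT (B r) 0\<bar>^2))) ` C)
     * (\<Sum>r\<in>C. p r * d_hyp (mob_f (B r) 0) 0)"

end

theory Submission
  imports Defs
begin

text \<open>
  A sequence u in the span V of the v(x;c) with \<open>\<bar>x\<bar> < 1\<close> is encoded by its generating
  function \<open>\<Phi>\<close> on (-1,1), where v(x;c) corresponds to \<open>z \<mapsto> ln (1 + x z)\<close>. The
  coefficients \<open>b\<^sub>k\<^sub>,\<^sub>n\<close> are such that \<open>T\<^sub>r\<close> acts on generating functions as
  \<open>\<Phi> \<mapsto> \<Phi> \<circ> f\<^sub>r\<^sup>T - \<Phi> (f\<^sub>r\<^sup>T 0)\<close>, and the zeroth entry of \<open>T\<^sub>r u\<close> is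
  \<open>\<Phi> (f\<^sub>r\<^sup>T 0)\<close>. Hence \<open>[T\<^sup>k\<^sup>+\<^sup>1 v]\<^sub>0\<close> is a \<open>\<pi>\<close>-average of values at
  \<open>f\<^sub>r\<^sup>T 0\<close> of k-fold compositions of the functions \<open>ln (1 + f\<^sub>r(0) z)\<close> with such maps.

  Measure distances on (-1,1) by \<open>q(z\<^sub>1, z\<^sub>2) = tanh (d_hyp(z\<^sub>1, z\<^sub>2) / 4)\<close>. Each
  \<open>ln (1 + f\<^sub>r(0) z)\<close> is Lipschitz for q with constant \<open>d_hyp(f\<^sub>r(0), 0)\<close>, and by
  Birkhoff's contraction theorem every \<open>f\<^sub>r\<^sup>T\<close> contracts q by the factor \<open>\<rho>\<close>, since
  \<open>f\<^sub>r\<close> maps [-1,1] into \<open>[-\<rho>, \<rho>]\<close>. As the weights \<open>\<pi>\<^sub>r Q\<^sub>r\<^sub>,\<^sub>s / \<pi>\<^sub>s\<close>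
  preserve \<open>\<pi>\<close>-averages, the (k+1)-st term is at most
  \<open>\<rho>\<^sup>k max\<^sub>r q(f\<^sub>r\<^sup>T 0, 0) \<Sum>\<^sub>r \<pi>\<^sub>r d_hyp(f\<^sub>r(0), 0)\<close>, where
  \<open>q(a, 0) = \<bar>a\<bar> / (1 + sqrt (1 - a\<^sup>2))\<close>. Summing the geometric tail gives the bound.
\<close>

section \<open>Binomial and logarithmic series\<close>

lemma binomial_series_neg_power:
  fixes y :: real
  assumes "\<bar>y\<bar> < 1"
  shows "(\<lambda>m. real ((m + j) choose j) * y ^ m) sums (1 / (1 - y) ^ Suc j)"
proof -
  have "\<bar>-y\<bar> < 1" using assms by simp
  from gen_binomial_real[OF this, of "- real (Suc j)"]
  have series: "(\<lambda>m. ((- real (Suc j)) gchoose m) * (-y) ^ m) sums (1 + - y) powr (- real (Suc j))" .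
  have coeff: "((- real (Suc j)) gchoose m) * (-y) ^ m = real ((m + j) choose j) * y ^ m" for m
  proof -
    have "((- real (Suc j)) gchoose m) = (-1) ^ m * ((real (Suc j) + real m - 1) gchoose m)"
      by (rule gbinomial_minus)
    also have "real (Suc j) + real m - 1 = real (m + j)" by simp
    also have "real (m + j) gchoose m = real ((m + j) choose j)"
      by (metis binomial_gbinomial binomial_symmetric le_add1 add_diff_cancel_left')
    finally show ?thesis by (simp add: power_minus[of y] mult_ac)
  qed
  have "(1 + - y) powr (- real (Suc j)) = inverse ((1 - y) powr real (Suc j))"
    by (metis powr_minus diff_conv_add_uminus)
  also have "(1 - y) powr real (Suc j) = (1 - y) ^ Suc j"
    using assms by (intro powr_realpow) simp
  finally have "(1 + - y) powr (- real (Suc j)) = 1 / (1 - y) ^ Suc j"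
    by (simp add: divide_inverse)
  with series show ?thesis unfolding coeff by simp
qed

lemma choose_pred_div:
  assumes "1 \<le> k" and "1 \<le> l"
  shows "real ((k - 1) choose (l - 1)) / real l = real (k choose l) / real k"
proof -
  obtain k' l' where k: "k = Suc k'" and l: "l = Suc l'"
    using assms by (cases k; cases l) auto
  have "real (Suc k') * real (k' choose l') = real (Suc k' choose Suc l') * real (Suc l')"
    by (metis Suc_times_binomial_eq of_nat_mult)
  thus ?thesis unfolding k l by (simp add: field_simps)
qed

lemma log_series_choose_sums:
  fixes a x :: real
  assumes ax: "\<bar>a * x\<bar> < 1" and l: "1 \<le> l"
  shows "(\<lambda>n. real (n choose l) * a ^ (n - l) * (- ((- x) ^ n) / real n))
           sums ((-1) ^ (l - 1) * x ^ l / real l / (1 + a * x) ^ l)"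
proof -
  obtain j where j: "l = Suc j" using l by (cases l) auto
  define f where "f n = real (n choose l) * a ^ (n - l) * (- ((- x) ^ n) / real n)" for n
  define K where "K = (-1) ^ j * x ^ Suc j / real (Suc j)"
  have "\<bar>- (a * x)\<bar> < 1" using ax by simp
  from sums_mult[OF binomial_series_neg_power[OF this, of j], of K]
  have "(\<lambda>m. K * (real ((m + j) choose j) * (- (a * x)) ^ m)) sums (K / (1 + a * x) ^ Suc j)"
    by simp
  moreover have "f (m + l) = K * (real ((m + j) choose j) * (- (a * x)) ^ m)" for m
  proof -
    have c: "real ((m + l) choose l) / real (m + l) = real ((m + j) choose j) / real (Suc j)"
      using choose_pred_div[of "m + l" l] j by simp
    have "f (m + l) = real ((m + l) choose l) / real (m + l) * a ^ m * (- ((- x) ^ (m + Suc j)))"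
      unfolding f_def j by simp
    also have "\<dots> = real ((m + j) choose j) / real (Suc j) * a ^ m * (- ((- x) ^ (m + Suc j)))"
      unfolding j[symmetric] c ..
    also have "\<dots> = K * (real ((m + j) choose j) * (- (a * x)) ^ m)"
      unfolding K_def
      by (simp add: power_add power_minus[of x] power_minus[of "a * x"] power_mult_distrib field_simps)
    finally show ?thesis .
  qed
  ultimately have "(\<lambda>m. f (m + l)) sums (K / (1 + a * x) ^ Suc j)" by simp
  moreover have "f i = 0" if "i < l" for i using that by (simp add: f_def)
  ultimately have "f sums (K / (1 + a * x) ^ Suc j)"
    using sums_zero_iff_shift[of l f] by simp
  thus ?thesis unfolding f_def K_def j by simp
qed

lemma sum_choose_pred_log_coeffs:
  fixes a y :: real
  assumes k: "1 \<le> k"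
  shows "(\<Sum>l=1..k. real ((k - 1) choose (l - 1)) * a ^ (k - l) * ((-1) ^ (l - 1) * y ^ l / real l))
         = (a ^ k - (a - y) ^ k) / real k"
proof -
  have summand: "real ((k - 1) choose (l - 1)) * a ^ (k - l) * ((-1) ^ (l - 1) * y ^ l / real l)
      = - (real (k choose l) * (- y) ^ l * a ^ (k - l)) / real k" if l: "l \<in> {1..k}" for l
  proof -
    obtain j where j: "l = Suc j" using l by (cases l) auto
    have "(-1::real) ^ (l - 1) * y ^ l = - ((- y) ^ l)" unfolding j by (simp add: power_minus[of y])
    with choose_pred_div[OF k, of l] l show ?thesis
      by (simp add: field_simps)
  qed
  have binomial: "(a - y) ^ k = a ^ k + (\<Sum>l=1..k. real (k choose l) * (- y) ^ l * a ^ (k - l))"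
    using binomial_ring[of "- y" a k] by (simp add: atMost_atLeast0 sum.atLeast_Suc_atMost)
  have "(\<Sum>l=1..k. real ((k - 1) choose (l - 1)) * a ^ (k - l) * ((-1) ^ (l - 1) * y ^ l / real l))
      = (\<Sum>l=1..k. - (real (k choose l) * (- y) ^ l * a ^ (k - l)) / real k)"
    by (rule sum.cong[OF refl summand])
  also have "\<dots> = - (\<Sum>l=1..k. real (k choose l) * (- y) ^ l * a ^ (k - l)) / real k"
    by (simp add: sum_negf sum_divide_distrib)
  also have "\<dots> = (a ^ k - (a - y) ^ k) / real k"
    unfolding binomial by simp
  finally show ?thesis .
qed

section \<open>Moebius maps of positive matrices\<close>

text \<open>In the coordinates (1 + z, 1 - z), denominator plus and minus numerator of f are the rows
  of B, and those of \<open>f\<^sup>T\<close> its columns; this is how positivity of B enters.\<close>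

lemma mob_sums_of_num_denom:
  "mob_gamma B * z + mob_delta B + (mob_alpha B * z + mob_beta B) = B$1$1 * (1 + z) + B$1$2 * (1 - z)"
  "mob_gamma B * z + mob_delta B - (mob_alpha B * z + mob_beta B) = B$2$1 * (1 + z) + B$2$2 * (1 - z)"
  "mob_beta B * z + mob_delta B + (mob_alpha B * z + mob_gamma B) = B$1$1 * (1 + z) + B$2$1 * (1 - z)"
  "mob_beta B * z + mob_delta B - (mob_alpha B * z + mob_gamma B) = B$1$2 * (1 + z) + B$2$2 * (1 - z)"
  unfolding mob_alpha_def mob_beta_def mob_gamma_def mob_delta_def by (simp_all add: field_simps)

lemma convex_combination_pos:
  fixes a c z :: real
  assumes "0 < a" "0 < c" "\<bar>z\<bar> \<le> 1"
  shows "0 < a * (1 + z) + c * (1 - z)"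
proof (cases "0 \<le> z")
  case True
  hence "0 < a * (1 + z)" "0 \<le> c * (1 - z)" using assms by auto
  thus ?thesis by linarith
next
  case False
  hence "0 \<le> a * (1 + z)" "0 < c * (1 - z)" using assms by auto
  thus ?thesis by linarith
qed

lemma mob_num_less_denom:
  assumes B: "\<forall>i j. 0 < B $ i $ j" and z: "\<bar>z\<bar> \<le> 1"
  shows "\<bar>mob_alpha B * z + mob_beta B\<bar> < mob_gamma B * z + mob_delta B"
    and "\<bar>mob_alpha B * z + mob_gamma B\<bar> < mob_beta B * z + mob_delta B"
proof -
  have "0 < B$i$1 * (1 + z) + B$j$2 * (1 - z)" "0 < B$1$i * (1 + z) + B$2$j * (1 - z)" for i j
    using B z by (simp_all add: convex_combination_pos)
  thus "\<bar>mob_alpha B * z + mob_beta B\<bar> < mob_gamma B * z + mob_delta B"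
    and "\<bar>mob_alpha B * z + mob_gamma B\<bar> < mob_beta B * z + mob_delta B"
    using mob_sums_of_num_denom[of B z] by (smt (verit))+
qed

lemma mob_denoms_pos:
  assumes "\<forall>i j. 0 < B $ i $ j" and "\<bar>z\<bar> \<le> 1"
  shows "0 < mob_gamma B * z + mob_delta B" and "0 < mob_beta B * z + mob_delta B"
  using mob_num_less_denom[OF assms] by linarith+

lemma mob_f_abs_less_1:
  assumes "\<forall>i j. 0 < B $ i $ j" and "\<bar>z\<bar> \<le> 1"
  shows "\<bar>mob_f B z\<bar> < 1"
  using mob_num_less_denom(1)[OF assms] mob_denoms_pos(1)[OF assms]
  by (simp add: mob_f_def abs_divide)

lemma mob_fT_abs_less_1:
  assumes "\<forall>i j. 0 < B $ i $ j" and "\<bar>z\<bar> \<le> 1"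
  shows "\<bar>mob_fT B z\<bar> < 1"
  using mob_num_less_denom(2)[OF assms] mob_denoms_pos(2)[OF assms]
  by (simp add: mob_fT_def abs_divide)

lemma one_plus_mult_pos:
  fixes u v :: real
  assumes "\<bar>u\<bar> < 1" "\<bar>v\<bar> \<le> 1"
  shows "0 < 1 + u * v"
proof -
  have "\<bar>u * v\<bar> \<le> \<bar>u\<bar>" using assms(2) by (simp add: abs_mult mult_right_le_one_le)
  thus ?thesis using assms(1) by linarith
qed

lemma deriv_mob_f_0:
  assumes "mob_delta B \<noteq> 0"
  shows "deriv (mob_f B) 0 = (mob_alpha B * mob_delta B - mob_beta B * mob_gamma B) / (mob_delta B)\<^sup>2"
proof -
  have "(mob_f B has_real_derivative
          (mob_alpha B * mob_delta B - mob_beta B * mob_gamma B) / (mob_delta B)\<^sup>2) (at 0)"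
    unfolding mob_f_def[abs_def] using assms
    by (auto intro!: derivative_eq_intros simp: power2_eq_square)
  thus ?thesis by (rule DERIV_imp_deriv)
qed

lemma moebius_expansion_at_0:
  fixes a b c d x :: real
  assumes d: "d \<noteq> 0" and D: "c * x + d \<noteq> 0"
  shows "(a * x + b) / (c * x + d) = b / d + (a * d - b * c) / d\<^sup>2 * x / (1 + c / d * x)"
proof -
  have "1 + c / d * x = (c * x + d) / d" using d by (simp add: field_simps)
  hence "(a * d - b * c) / d\<^sup>2 * x / (1 + c / d * x) = (a * d - b * c) * x / (d * (c * x + d))"
    using d by (simp add: power2_eq_square)
  also have "b / d + \<dots> = (b * (c * x + d) + (a * d - b * c) * x) / (d * (c * x + d))"
    using d D by (simp add: add_divide_distrib)
  also have "b * (c * x + d) + (a * d - b * c) * x = d * (a * x + b)" by (simp add: algebra_simps)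
  finally show ?thesis using d by simp
qed

lemma mob_f_expansion:
  assumes B: "\<forall>i j. 0 < B $ i $ j" and x: "\<bar>x\<bar> \<le> 1"
  shows "mob_f B x = mob_f B 0 + deriv (mob_f B) 0 * x / (1 + mob_fT B 0 * x)"
proof -
  have d: "0 < mob_delta B" using mob_denoms_pos(1)[OF B, of 0] by simp
  have "0 < mob_gamma B * x + mob_delta B" using mob_denoms_pos(1)[OF B x] .
  with d show ?thesis
    unfolding deriv_mob_f_0[OF d[THEN less_imp_neq, symmetric]] mob_f_def mob_fT_def
    by (simp add: moebius_expansion_at_0)
qed

lemma moebius_cross_identity:
  fixes a b c d x z :: real
  assumes d: "d \<noteq> 0" and Dz: "b * z + d \<noteq> 0" and Dx: "c * x + d \<noteq> 0"
  shows "(1 + x * ((a * z + c) / (b * z + d))) * (1 + b / d * z)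
       = (1 + (a * x + b) / (c * x + d) * z) * (1 + x * (c / d))"
proof -
  have l1: "1 + x * ((a * z + c) / (b * z + d)) = ((b * z + d) + x * (a * z + c)) / (b * z + d)"
    and l2: "1 + b / d * z = (b * z + d) / d"
    and r1: "1 + (a * x + b) / (c * x + d) * z = ((c * x + d) + (a * x + b) * z) / (c * x + d)"
    and r2: "1 + x * (c / d) = (c * x + d) / d"
    using assms by (simp_all add: field_simps)
  have "(b * z + d) + x * (a * z + c) = (c * x + d) + (a * x + b) * z"
    by (simp add: algebra_simps)
  thus ?thesis unfolding l1 l2 r1 r2 using Dz Dx by simp
qed

lemma mob_cross_identity:
  assumes B: "\<forall>i j. 0 < B $ i $ j" and "\<bar>x\<bar> \<le> 1" "\<bar>z\<bar> \<le> 1"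
  shows "(1 + x * mob_fT B z) * (1 + mob_f B 0 * z) = (1 + mob_f B x * z) * (1 + x * mob_fT B 0)"
proof -
  have "0 < mob_delta B" using mob_denoms_pos(1)[OF B, of 0] by simp
  moreover have "0 < mob_beta B * z + mob_delta B" "0 < mob_gamma B * x + mob_delta B"
    using mob_denoms_pos assms by blast+
  ultimately show ?thesis
    unfolding mob_f_def mob_fT_def using moebius_cross_identity[of "mob_delta B"] by simp
qed

lemma ln_mob_fT_diff:
  assumes B: "\<forall>i j. 0 < B $ i $ j" and x: "\<bar>x\<bar> < 1" and z: "\<bar>z\<bar> < 1"
  shows "ln (1 + x * mob_fT B z) - ln (1 + x * mob_fT B 0)
       = ln (1 + mob_f B x * z) - ln (1 + mob_f B 0 * z)"
proof -
  have "\<bar>mob_fT B z\<bar> \<le> 1" "\<bar>mob_fT B 0\<bar> \<le> 1" "\<bar>mob_f B x\<bar> < 1" "\<bar>mob_f B 0\<bar> < 1"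
    using mob_fT_abs_less_1[OF B, of z] mob_fT_abs_less_1[OF B, of 0]
      mob_f_abs_less_1[OF B, of x] mob_f_abs_less_1[OF B, of 0] x z by simp_all
  hence "0 < 1 + x * mob_fT B z" "0 < 1 + x * mob_fT B 0"
    "0 < 1 + mob_f B x * z" "0 < 1 + mob_f B 0 * z"
    using one_plus_mult_pos x z by auto
  with mob_cross_identity[OF B, of x z] x z show ?thesis
    by (smt (verit) ln_mult)
qed

section \<open>The operators T_r on generating functions\<close>

lemma bcoef_0_vseq_sums:
  assumes "\<bar>mob_fT B 0 * x\<bar> < 1"
  shows "(\<lambda>n. bcoef B 0 n * vseq x c n) sums ln (1 + mob_fT B 0 * x)"
proof -
  have "bcoef B 0 n * vseq x c n = - ((- (mob_fT B 0 * x)) ^ n) / real n" for n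
    by (cases "n = 0") (simp_all add: bcoef_def vseq_def power_mult_distrib[symmetric])
  thus ?thesis using ln_series'[OF assms] by simp
qed

lemma bcoef_vseq_expansion:
  assumes "1 \<le> k"
  shows "bcoef B k n * vseq x c n
    = (\<Sum>l=1..k. real ((k - 1) choose (l - 1)) * (- mob_f B 0) ^ (k - l) * deriv (mob_f B) 0 ^ l
         * (real (n choose l) * mob_fT B 0 ^ (n - l) * (- ((- x) ^ n) / real n)))"
proof (cases "n = 0")
  case True
  thus ?thesis by (simp add: bcoef_def)
next
  case False
  have "bcoef B k n = (\<Sum>l=1..min k n. real (n choose l) * real ((k - 1) choose (l - 1))
          * mob_fT B 0 ^ (n - l) * (- mob_f B 0) ^ (k - l) * deriv (mob_f B) 0 ^ l)"
    using False assms by (simp add: bcoef_def)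
  also have "\<dots> = (\<Sum>l=1..k. real (n choose l) * real ((k - 1) choose (l - 1))
          * mob_fT B 0 ^ (n - l) * (- mob_f B 0) ^ (k - l) * deriv (mob_f B) 0 ^ l)"
    by (rule sum.mono_neutral_left) auto
  finally have b: "bcoef B k n = \<dots>" .
  have "vseq x c n = - ((- x) ^ n) / real n" using False by (simp add: vseq_def)
  thus ?thesis unfolding b sum_distrib_right by (intro sum.cong) (simp_all add: mult_ac)
qed

lemma bcoef_vseq_sums_pos:
  assumes B: "\<forall>i j. 0 < B $ i $ j" and x: "\<bar>x\<bar> < 1" and k: "1 \<le> k"
  shows "(\<lambda>n. bcoef B k n * vseq x c n) sums (((- mob_f B 0) ^ k - (- mob_f B x) ^ k) / real k)"
proof -
  define A where "A = mob_fT B 0"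
  define F0 where "F0 = mob_f B 0"
  define D where "D = deriv (mob_f B) 0"
  define c' where "c' l = real ((k - 1) choose (l - 1)) * (- F0) ^ (k - l) * D ^ l" for l
  have Ax: "\<bar>A * x\<bar> < 1"
    using mult_strict_mono[OF mob_fT_abs_less_1[OF B, of 0] x] by (simp add: A_def abs_mult)
  have "(\<lambda>n. \<Sum>l=1..k. c' l * (real (n choose l) * A ^ (n - l) * (- ((- x) ^ n) / real n))) sums
      (\<Sum>l=1..k. c' l * ((-1) ^ (l - 1) * x ^ l / real l / (1 + A * x) ^ l))"
    by (intro sums_sum sums_mult log_series_choose_sums[OF Ax]) simp
  also have "(\<Sum>l=1..k. c' l * ((-1) ^ (l - 1) * x ^ l / real l / (1 + A * x) ^ l))
      = (\<Sum>l=1..k. real ((k - 1) choose (l - 1)) * (- F0) ^ (k - l)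
          * ((-1) ^ (l - 1) * (D * x / (1 + A * x)) ^ l / real l))"
    unfolding c'_def by (intro sum.cong) (simp_all add: power_divide power_mult_distrib mult_ac)
  also have "\<dots> = ((- F0) ^ k - (- mob_f B x) ^ k) / real k"
    using sum_choose_pred_log_coeffs[OF k] mob_f_expansion[OF B, of x] x
    by (simp add: F0_def D_def A_def)
  finally show ?thesis
    unfolding bcoef_vseq_expansion[OF k] c'_def A_def F0_def D_def by (simp add: mult.assoc)
qed

lemma bcoef_vseq_sums:
  assumes B: "\<forall>i j. 0 < B $ i $ j" and x: "\<bar>x\<bar> < 1"
  shows "(\<lambda>n. bcoef B k n * vseq x c n) sums
           (vseq (mob_f B x) (ln (1 + mob_fT B 0 * x)) k - vseq (mob_f B 0) 0 k)"
proof (cases "k = 0")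
  case True
  have "\<bar>mob_fT B 0 * x\<bar> < 1"
    using mult_strict_mono[OF mob_fT_abs_less_1[OF B, of 0] x] by (simp add: abs_mult)
  with True show ?thesis using bcoef_0_vseq_sums by (simp add: vseq_def)
next
  case False
  with bcoef_vseq_sums_pos[OF B x, of k] show ?thesis
    by (simp add: vseq_def diff_divide_distrib)
qed

text \<open>\<open>V_genfun u \<Phi>\<close>: u lies in the span of the sequences v(x;c) with \<open>\<bar>x\<bar> < 1\<close>, and
  \<open>\<Phi> z = (\<Sum>n\<ge>1. u\<^sub>n z\<^sup>n)\<close> on (-1,1), which for v(x;c) is \<open>ln (1 + x z)\<close>. Only the values
  of \<open>\<Phi>\<close> on (-1,1) matter, whence the last rule.\<close>

inductive V_genfun :: "(nat \<Rightarrow> real) \<Rightarrow> (real \<Rightarrow> real) \<Rightarrow> bool" where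
  V_genfun_vseq: "\<bar>x\<bar> < 1 \<Longrightarrow> V_genfun (vseq x c) (\<lambda>z. ln (1 + x * z))"
| V_genfun_zero: "V_genfun (\<lambda>_. 0) (\<lambda>_. 0)"
| V_genfun_add: "V_genfun u \<Phi> \<Longrightarrow> V_genfun v \<Psi> \<Longrightarrow> V_genfun (\<lambda>n. u n + v n) (\<lambda>z. \<Phi> z + \<Psi> z)"
| V_genfun_scale: "V_genfun u \<Phi> \<Longrightarrow> V_genfun (\<lambda>n. a * u n) (\<lambda>z. a * \<Phi> z)"
| V_genfun_cong: "V_genfun u \<Phi> \<Longrightarrow> (\<And>z. \<bar>z\<bar> < 1 \<Longrightarrow> \<Psi> z = \<Phi> z) \<Longrightarrow> V_genfun u \<Psi>"

lemma V_genfun_sum: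
  assumes "finite S" and "\<And>i. i \<in> S \<Longrightarrow> V_genfun (u i) (\<Phi> i)"
  shows "V_genfun (\<lambda>n. \<Sum>i\<in>S. u i n) (\<lambda>z. \<Sum>i\<in>S. \<Phi> i z)"
  using assms by (induction S rule: finite_induct) (auto intro: V_genfun.intros)

lemma Top_eqI:
  assumes "\<And>k. (\<lambda>n. bcoef B k n * u n) sums w k"
  shows "Top B u = w"
  using assms by (auto simp: Top_def sums_unique[symmetric])

lemma Top_vseq:
  assumes B: "\<forall>i j. 0 < B $ i $ j" and x: "\<bar>x\<bar> < 1"
  shows "(\<forall>k. (\<lambda>n. bcoef B k n * vseq x c n) sums Top B (vseq x c) k)
       \<and> V_genfun (Top B (vseq x c)) (\<lambda>z. ln (1 + x * mob_fT B z) - ln (1 + x * mob_fT B 0))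
       \<and> Top B (vseq x c) 0 = ln (1 + x * mob_fT B 0)"
proof -
  define w where "w k = vseq (mob_f B x) (ln (1 + mob_fT B 0 * x)) k - vseq (mob_f B 0) 0 k" for k
  have sums: "(\<lambda>n. bcoef B k n * vseq x c n) sums w k" for k
    unfolding w_def using bcoef_vseq_sums[OF B x] .
  hence Top: "Top B (vseq x c) = w" by (rule Top_eqI)
  have "\<bar>mob_f B x\<bar> < 1" "\<bar>mob_f B 0\<bar> < 1"
    using mob_f_abs_less_1[OF B] x by auto
  hence "V_genfun (\<lambda>k. vseq (mob_f B x) (ln (1 + mob_fT B 0 * x)) k + (-1) * vseq (mob_f B 0) 0 k)
      (\<lambda>z. ln (1 + mob_f B x * z) + (-1) * ln (1 + mob_f B 0 * z))"
    by (intro V_genfun.intros)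
  hence "V_genfun w (\<lambda>z. ln (1 + mob_f B x * z) + (-1) * ln (1 + mob_f B 0 * z))"
    by (simp add: w_def[abs_def])
  hence "V_genfun w (\<lambda>z. ln (1 + x * mob_fT B z) - ln (1 + x * mob_fT B 0))"
    by (rule V_genfun_cong) (simp add: ln_mob_fT_diff[OF B x])
  moreover have "w 0 = ln (1 + x * mob_fT B 0)" by (simp add: w_def vseq_def mult.commute)
  ultimately show ?thesis using sums Top by simp
qed

lemma Top_V_genfun:
  assumes "V_genfun u \<Phi>" and B: "\<forall>i j. 0 < B $ i $ j"
  shows "(\<forall>k. (\<lambda>n. bcoef B k n * u n) sums Top B u k)
       \<and> V_genfun (Top B u) (\<lambda>z. \<Phi> (mob_fT B z) - \<Phi> (mob_fT B 0))
       \<and> Top B u 0 = \<Phi> (mob_fT B 0)"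
  using assms(1)
proof (induction rule: V_genfun.induct)
  case (V_genfun_vseq x c)
  thus ?case by (rule Top_vseq[OF B])
next
  case V_genfun_zero
  have "Top B (\<lambda>_. 0) = (\<lambda>_. 0)" by (rule Top_eqI) simp
  thus ?case by (simp add: V_genfun.V_genfun_zero)
next
  case (V_genfun_add u \<Phi> v \<Psi>)
  have sums: "(\<lambda>n. bcoef B k n * (u n + v n)) sums (Top B u k + Top B v k)" for k
    using sums_add[of "\<lambda>n. bcoef B k n * u n" _ "\<lambda>n. bcoef B k n * v n"] V_genfun_add.IH
    by (simp add: distrib_left)
  hence "Top B (\<lambda>n. u n + v n) = (\<lambda>k. Top B u k + Top B v k)" by (rule Top_eqI)
  moreover have "V_genfun (\<lambda>k. Top B u k + Top B v k)
      (\<lambda>z. \<Phi> (mob_fT B z) + \<Psi> (mob_fT B z) - (\<Phi> (mob_fT B 0) + \<Psi> (mob_fT B 0)))"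
  proof (rule V_genfun.V_genfun_cong[OF V_genfun.V_genfun_add])
    show "V_genfun (Top B u) (\<lambda>z. \<Phi> (mob_fT B z) - \<Phi> (mob_fT B 0))"
      and "V_genfun (Top B v) (\<lambda>z. \<Psi> (mob_fT B z) - \<Psi> (mob_fT B 0))"
      using V_genfun_add.IH by blast+
  qed (simp add: algebra_simps)
  ultimately show ?case using sums V_genfun_add.IH by simp
next
  case (V_genfun_scale u \<Phi> a)
  have sums: "(\<lambda>n. bcoef B k n * (a * u n)) sums (a * Top B u k)" for k
    using sums_mult[OF V_genfun_scale.IH[THEN conjunct1, rule_format, of k], of a]
    by (simp add: mult.left_commute)
  hence "Top B (\<lambda>n. a * u n) = (\<lambda>k. a * Top B u k)" by (rule Top_eqI)
  moreover have "V_genfun (\<lambda>k. a * Top B u k) (\<lambda>z. a * (\<Phi> (mob_fT B z) - \<Phi> (mob_fT B 0)))"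
    using V_genfun_scale.IH by (intro V_genfun.V_genfun_scale) simp
  ultimately show ?case using sums V_genfun_scale.IH by (simp add: right_diff_distrib)
next
  case (V_genfun_cong u \<Phi> \<Psi>)
  have agree: "\<Psi> (mob_fT B z) = \<Phi> (mob_fT B z)" if "\<bar>z\<bar> \<le> 1" for z
    using V_genfun_cong.hyps(2) mob_fT_abs_less_1[OF B that] .
  hence eq: "\<Psi> (mob_fT B z) - \<Psi> (mob_fT B 0) = \<Phi> (mob_fT B z) - \<Phi> (mob_fT B 0)"
    if "\<bar>z\<bar> < 1" for z
    using that by simp
  have at0: "\<Psi> (mob_fT B 0) = \<Phi> (mob_fT B 0)" using agree[of 0] by simp
  from V_genfun_cong.IH
  have "V_genfun (Top B u) (\<lambda>z. \<Psi> (mob_fT B z) - \<Psi> (mob_fT B 0))"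
    by (blast intro: V_genfun.V_genfun_cong eq)
  with V_genfun_cong.IH at0 show ?case
    by simp
qed

section \<open>Hilbert metric and Birkhoff contraction\<close>

text \<open>For positive vectors with cross ratio \<open>t = u\<^sub>1 v\<^sub>2 / (u\<^sub>2 v\<^sub>1)\<close> this is
  \<open>\<bar>sqrt t - 1\<bar> / (sqrt t + 1) = tanh (\<bar>ln t\<bar> / 4)\<close>, the hyperbolic tangent of a quarter of the
  Hilbert projective distance of \<open>(u\<^sub>1, u\<^sub>2)\<close> and \<open>(v\<^sub>1, v\<^sub>2)\<close>.\<close>
definition hilbert_q :: "real \<Rightarrow> real \<Rightarrow> real \<Rightarrow> real \<Rightarrow> real" where
  "hilbert_q u1 u2 v1 v2 = \<bar>u1 * v2 - u2 * v1\<bar> / (sqrt (u1 * v2) + sqrt (u2 * v1))\<^sup>2"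

lemma hilbert_q_nonneg: "0 \<le> hilbert_q u1 u2 v1 v2"
  by (simp add: hilbert_q_def)

lemma sqrt_cross_add_le:
  fixes x1 x2 y1 y2 :: real
  assumes "0 \<le> x1" "0 \<le> x2" "0 \<le> y1" "0 \<le> y2"
  shows "sqrt (x1 * y2) + sqrt (x2 * y1) \<le> sqrt ((x1 + x2) * (y1 + y2))"
proof (rule real_le_rsqrt)
  have "2 * (sqrt (x1 * y2) * sqrt (x2 * y1)) = 2 * (sqrt (x1 * y1) * sqrt (x2 * y2))"
    by (simp add: real_sqrt_mult[symmetric] mult_ac)
  also have "\<dots> \<le> x1 * y1 + x2 * y2"
    using sum_squares_bound[of "sqrt (x1 * y1)" "sqrt (x2 * y2)"] assms by simp
  finally have "2 * (sqrt (x1 * y2) * sqrt (x2 * y1)) \<le> x1 * y1 + x2 * y2" .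
  thus "(sqrt (x1 * y2) + sqrt (x2 * y1))\<^sup>2 \<le> (x1 + x2) * (y1 + y2)"
    using assms by (simp add: power2_sum algebra_simps)
qed

lemma sqrt_cross_linear_le:
  fixes a b c d u1 u2 v1 v2 :: real
  assumes "0 \<le> a" "0 \<le> b" "0 \<le> c" "0 \<le> d" "0 \<le> u1" "0 \<le> u2" "0 \<le> v1" "0 \<le> v2"
  shows "sqrt (a * d) * sqrt (u1 * v2) + sqrt (b * c) * sqrt (u2 * v1)
           \<le> sqrt ((a * u1 + b * u2) * (c * v1 + d * v2))"
  using sqrt_cross_add_le[of "a * u1" "b * u2" "c * v1" "d * v2"] assms
  by (simp add: real_sqrt_mult[symmetric] mult_ac)

lemma hilbert_q_scale:
  fixes l m u1 u2 v1 v2 :: real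
  assumes "0 < l" "0 < m" "0 \<le> u1" "0 \<le> u2" "0 \<le> v1" "0 \<le> v2"
  shows "hilbert_q (l * u1) (l * u2) (m * v1) (m * v2) = hilbert_q u1 u2 v1 v2"
proof -
  have "sqrt (l * u1 * (m * v2)) + sqrt (l * u2 * (m * v1))
      = sqrt (l * m) * (sqrt (u1 * v2) + sqrt (u2 * v1))"
    by (simp add: real_sqrt_mult[symmetric] mult_ac distrib_left)
  moreover have "l * u1 * (m * v2) - l * u2 * (m * v1) = (l * m) * (u1 * v2 - u2 * v1)"
    by (simp add: algebra_simps)
  ultimately show ?thesis
    using assms by (simp add: hilbert_q_def power_mult_distrib abs_mult)
qed

text \<open>Birkhoff's contraction theorem for positive 2x2 matrices.\<close>
lemma hilbert_q_matrix_contraction: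
  fixes m11 m12 m21 m22 u1 u2 v1 v2 :: real
  assumes m: "0 < m11" "0 < m12" "0 < m21" "0 < m22"
    and u: "0 < u1" "0 < u2" "0 < v1" "0 < v2"
  shows "hilbert_q (m11 * u1 + m12 * u2) (m21 * u1 + m22 * u2) (m11 * v1 + m12 * v2) (m21 * v1 + m22 * v2)
    \<le> \<bar>sqrt (m11 * m22) - sqrt (m12 * m21)\<bar> / (sqrt (m11 * m22) + sqrt (m12 * m21))
        * hilbert_q u1 u2 v1 v2"
proof -
  define X where "X = sqrt (m11 * m22)"
  define Y where "Y = sqrt (m12 * m21)"
  define A where "A = sqrt (u1 * v2)"
  define C where "C = sqrt (u2 * v1)"
  define S where "S = sqrt ((m11 * u1 + m12 * u2) * (m21 * v1 + m22 * v2))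
                    + sqrt ((m21 * u1 + m22 * u2) * (m11 * v1 + m12 * v2))"
  have pos: "0 < X" "0 < Y" "0 < A" "0 < C" unfolding X_def Y_def A_def C_def using m u by auto
  have num: "(m11 * u1 + m12 * u2) * (m21 * v1 + m22 * v2) - (m21 * u1 + m22 * u2) * (m11 * v1 + m12 * v2)
      = (X\<^sup>2 - Y\<^sup>2) * (u1 * v2 - u2 * v1)"
    unfolding X_def Y_def using m by (simp add: algebra_simps)
  have le_S: "X * A + Y * C + (Y * A + X * C) \<le> S"
    unfolding S_def X_def Y_def A_def C_def
    using sqrt_cross_linear_le[of m11 m12 m21 m22 u1 u2 v1 v2]
      sqrt_cross_linear_le[of m21 m22 m11 m12 u1 u2 v1 v2] m u
    by (simp add: mult.commute)
  have lower_pos: "0 < (X + Y) * (A + C)" using pos by simp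
  have "((X + Y) * (A + C))\<^sup>2 \<le> S\<^sup>2"
    using le_S lower_pos by (intro power_mono) (simp_all add: algebra_simps)
  moreover have "0 < S\<^sup>2 * ((X + Y) * (A + C))\<^sup>2"
    using le_S lower_pos by (simp add: algebra_simps)
  ultimately have "\<bar>X\<^sup>2 - Y\<^sup>2\<bar> * \<bar>u1 * v2 - u2 * v1\<bar> / S\<^sup>2
      \<le> \<bar>X\<^sup>2 - Y\<^sup>2\<bar> * \<bar>u1 * v2 - u2 * v1\<bar> / ((X + Y) * (A + C))\<^sup>2"
    by (intro divide_left_mono) auto
  also have "\<dots> = \<bar>X - Y\<bar> / (X + Y) * (\<bar>u1 * v2 - u2 * v1\<bar> / (A + C)\<^sup>2)"
    using pos by (simp add: power2_eq_square square_diff_square_factored abs_mult)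
  finally show ?thesis
    unfolding hilbert_q_def num S_def[symmetric] X_def Y_def A_def C_def by (simp add: abs_mult)
qed

lemma birkhoff_coefficient_le:
  fixes a b c d \<rho> :: real
  assumes "0 < a" "0 < b" "0 < c" "0 < d" "\<rho> \<le> 1"
    and "\<bar>a - c\<bar> \<le> \<rho> * (a + c)" "\<bar>b - d\<bar> \<le> \<rho> * (b + d)"
  shows "\<bar>sqrt (a * d) - sqrt (b * c)\<bar> \<le> \<rho> * (sqrt (a * d) + sqrt (b * c))"
proof -
  have "0 \<le> \<rho>" using assms(1,3,6) by (smt (verit) zero_le_mult_iff)
  hence r: "0 \<le> 1 - \<rho>" "0 \<le> 1 + \<rho>" using assms(5) by auto
  have key: "sqrt (x * y) * (1 - \<rho>) \<le> sqrt (z * w) * (1 + \<rho>)"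
    if "0 < x" "0 < y" "0 < z" "0 < w" "x * (1 - \<rho>) \<le> z * (1 + \<rho>)" "y * (1 - \<rho>) \<le> w * (1 + \<rho>)"
    for x y z w :: real
  proof -
    have "(x * (1 - \<rho>)) * (y * (1 - \<rho>)) \<le> (z * (1 + \<rho>)) * (w * (1 + \<rho>))"
      by (rule mult_mono[OF that(5,6)]) (use that r in auto)
    hence "sqrt ((x * y) * (1 - \<rho>)\<^sup>2) \<le> sqrt ((z * w) * (1 + \<rho>)\<^sup>2)"
      by (simp add: power2_eq_square mult_ac)
    thus ?thesis using r by (simp add: real_sqrt_mult)
  qed
  have "sqrt (a * d) * (1 - \<rho>) \<le> sqrt (c * b) * (1 + \<rho>)"
    using assms by (intro key) (auto simp: abs_le_iff algebra_simps)
  moreover have "sqrt (c * b) * (1 - \<rho>) \<le> sqrt (a * d) * (1 + \<rho>)"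
    using assms by (intro key) (auto simp: abs_le_iff algebra_simps)
  ultimately show ?thesis by (simp add: mult.commute[of c b] abs_le_iff algebra_simps)
qed

text \<open>\<open>disc_q z\<^sub>1 z\<^sub>2 = tanh (d_hyp z\<^sub>1 z\<^sub>2 / 4)\<close>.\<close>
definition disc_q :: "real \<Rightarrow> real \<Rightarrow> real" where
  "disc_q z1 z2 = hilbert_q (1 + z1) (1 - z1) (1 + z2) (1 - z2)"

lemma one_plus_minus_mob_fT:
  assumes B: "\<forall>i j. 0 < B $ i $ j" and z: "\<bar>z\<bar> \<le> 1"
  shows "1 + mob_fT B z = inverse (mob_beta B * z + mob_delta B) * (B$1$1 * (1 + z) + B$2$1 * (1 - z))"
    and "1 - mob_fT B z = inverse (mob_beta B * z + mob_delta B) * (B$1$2 * (1 + z) + B$2$2 * (1 - z))"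
  using mob_denoms_pos(2)[OF B z] mob_sums_of_num_denom(3,4)[of B z]
  by (simp_all add: mob_fT_def field_simps)

lemma mob_f_at_pm1_bounds:
  assumes B: "\<forall>i j. 0 < B $ i $ j"
    and f1: "\<bar>mob_f B 1\<bar> \<le> \<rho>" and fm1: "\<bar>mob_f B (-1)\<bar> \<le> \<rho>"
  shows "\<bar>B$1$1 - B$2$1\<bar> \<le> \<rho> * (B$1$1 + B$2$1)" "\<bar>B$1$2 - B$2$2\<bar> \<le> \<rho> * (B$1$2 + B$2$2)"
proof -
  have "mob_alpha B + mob_beta B = B$1$1 - B$2$1" "mob_gamma B + mob_delta B = B$1$1 + B$2$1"
    "mob_beta B - mob_alpha B = B$1$2 - B$2$2" "mob_delta B - mob_gamma B = B$1$2 + B$2$2"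
    using mob_sums_of_num_denom(1,2)[of B 1] mob_sums_of_num_denom(1,2)[of B "-1"] by simp_all
  hence "mob_f B 1 = (B$1$1 - B$2$1) / (B$1$1 + B$2$1)"
    "mob_f B (-1) = (B$1$2 - B$2$2) / (B$1$2 + B$2$2)"
    by (simp_all add: mob_f_def)
  moreover have "0 < B$1$1 + B$2$1" "0 < B$1$2 + B$2$2" using B by (simp_all add: add_pos_pos)
  ultimately show "\<bar>B$1$1 - B$2$1\<bar> \<le> \<rho> * (B$1$1 + B$2$1)" "\<bar>B$1$2 - B$2$2\<bar> \<le> \<rho> * (B$1$2 + B$2$2)"
    using f1 fm1 by (simp_all add: abs_divide divide_le_eq)
qed

lemma disc_q_mob_fT_contraction:
  assumes B: "\<forall>i j. 0 < B $ i $ j" and \<rho>: "\<rho> \<le> 1"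
    and f1: "\<bar>mob_f B 1\<bar> \<le> \<rho>" and fm1: "\<bar>mob_f B (-1)\<bar> \<le> \<rho>"
    and z: "\<bar>z1\<bar> < 1" "\<bar>z2\<bar> < 1"
  shows "disc_q (mob_fT B z1) (mob_fT B z2) \<le> \<rho> * disc_q z1 z2"
proof -
  have e: "0 < B$1$1" "0 < B$1$2" "0 < B$2$1" "0 < B$2$2" using B by auto
  have u: "0 < 1 + z1" "0 < 1 - z1" "0 < 1 + z2" "0 < 1 - z2" using z by auto
  have "disc_q (mob_fT B z1) (mob_fT B z2)
     = hilbert_q (B$1$1 * (1 + z1) + B$2$1 * (1 - z1)) (B$1$2 * (1 + z1) + B$2$2 * (1 - z1))
          (B$1$1 * (1 + z2) + B$2$1 * (1 - z2)) (B$1$2 * (1 + z2) + B$2$2 * (1 - z2))"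
    unfolding disc_q_def one_plus_minus_mob_fT[OF B less_imp_le[OF z(1)]]
      one_plus_minus_mob_fT[OF B less_imp_le[OF z(2)]]
    using mob_denoms_pos(2)[OF B less_imp_le[OF z(1)]] mob_denoms_pos(2)[OF B less_imp_le[OF z(2)]] e u
    by (intro hilbert_q_scale) (simp_all add: add_nonneg_nonneg)
  also have "\<dots> \<le> \<bar>sqrt (B$1$1 * B$2$2) - sqrt (B$2$1 * B$1$2)\<bar> / (sqrt (B$1$1 * B$2$2) + sqrt (B$2$1 * B$1$2))
        * disc_q z1 z2"
    unfolding disc_q_def by (rule hilbert_q_matrix_contraction) (use e u in auto)
  also have "\<dots> \<le> \<rho> * disc_q z1 z2"
  proof (rule mult_right_mono)
    show "0 \<le> disc_q z1 z2" by (simp add: disc_q_def hilbert_q_nonneg)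
    have "\<bar>sqrt (B$1$1 * B$2$2) - sqrt (B$1$2 * B$2$1)\<bar> \<le> \<rho> * (sqrt (B$1$1 * B$2$2) + sqrt (B$1$2 * B$2$1))"
      using birkhoff_coefficient_le[OF e \<rho> mob_f_at_pm1_bounds[OF B f1 fm1]] .
    moreover have "0 < sqrt (B$1$1 * B$2$2) + sqrt (B$1$2 * B$2$1)" using e by (simp add: add_pos_pos)
    ultimately show "\<bar>sqrt (B$1$1 * B$2$2) - sqrt (B$2$1 * B$1$2)\<bar> / (sqrt (B$1$1 * B$2$2) + sqrt (B$2$1 * B$1$2)) \<le> \<rho>"
      by (simp add: mult.commute[of "B$2$1"] divide_le_eq)
  qed
  finally show ?thesis .
qed

lemma disc_q_0:
  assumes "\<bar>a\<bar> < 1"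
  shows "disc_q a 0 = \<bar>a\<bar> / (1 + sqrt (1 - a\<^sup>2))"
proof -
  have "sqrt (1 + a) * sqrt (1 - a) = sqrt (1 - a\<^sup>2)"
    by (simp add: real_sqrt_mult[symmetric] power2_eq_square algebra_simps)
  hence denom: "(sqrt (1 + a) + sqrt (1 - a))\<^sup>2 = 2 * (1 + sqrt (1 - a\<^sup>2))"
    using assms by (simp add: power2_sum)
  have "disc_q a 0 = 2 * \<bar>a\<bar> / (sqrt (1 + a) + sqrt (1 - a))\<^sup>2"
    by (simp add: disc_q_def hilbert_q_def abs_mult)
  also have "\<dots> = \<bar>a\<bar> / (1 + sqrt (1 - a\<^sup>2))"
    unfolding denom by (subst mult_divide_mult_cancel_left) auto
  finally show ?thesis .
qed

text \<open>The left-hand side is the derivative of \<open>\<mu> \<mapsto> ln (e\<^sup>\<mu> u\<^sub>1 + u\<^sub>2) - ln (e\<^sup>\<mu> v\<^sub>1 + v\<^sub>2)\<close> at \<open>e = e\<^sup>\<mu>\<close>.\<close>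
lemma hilbert_q_deriv_bound:
  fixes u1 u2 v1 v2 e :: real
  assumes u: "0 < u1" "0 < u2" "0 < v1" "0 < v2" and e: "0 < e"
  shows "\<bar>e * u1 / (e * u1 + u2) - e * v1 / (e * v1 + v2)\<bar> \<le> hilbert_q u1 u2 v1 v2"
proof -
  define S where "S = sqrt (u1 * v2) + sqrt (u2 * v1)"
  have P: "0 < e * u1 + u2" "0 < e * v1 + v2" using u e by (auto intro!: add_pos_pos)
  have S: "0 < S" using u by (simp add: S_def add_pos_pos)
  have "sqrt e * S \<le> sqrt ((e * u1 + u2) * (e * v1 + v2))"
    using sqrt_cross_add_le[of "e * u1" u2 "e * v1" v2] u e
    by (simp add: S_def real_sqrt_mult distrib_left mult_ac)
  hence "(sqrt e * S)\<^sup>2 \<le> (sqrt ((e * u1 + u2) * (e * v1 + v2)))\<^sup>2"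
    using e u by (intro power_mono) (auto simp: S_def)
  hence eS: "e * S\<^sup>2 \<le> (e * u1 + u2) * (e * v1 + v2)" using e P by (simp add: power_mult_distrib)
  have "e * u1 / (e * u1 + u2) - e * v1 / (e * v1 + v2)
      = e * (u1 * v2 - u2 * v1) / ((e * u1 + u2) * (e * v1 + v2))"
    using P by (simp add: field_simps)
  hence "\<bar>e * u1 / (e * u1 + u2) - e * v1 / (e * v1 + v2)\<bar>
      = e * \<bar>u1 * v2 - u2 * v1\<bar> / ((e * u1 + u2) * (e * v1 + v2))"
    using e P by (simp add: abs_mult abs_divide)
  also have "\<dots> \<le> e * \<bar>u1 * v2 - u2 * v1\<bar> / (e * S\<^sup>2)"
    using eS e P S by (intro divide_left_mono mult_pos_pos) auto
  also have "\<dots> = hilbert_q u1 u2 v1 v2" unfolding hilbert_q_def S_def using e by simp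
  finally show ?thesis .
qed

lemma ln_one_plus_mult_lipschitz:
  fixes a z1 z2 :: real
  assumes a: "\<bar>a\<bar> < 1" and z: "\<bar>z1\<bar> < 1" "\<bar>z2\<bar> < 1"
  shows "\<bar>ln (1 + a * z1) - ln (1 + a * z2)\<bar> \<le> d_hyp a 0 * disc_q z1 z2"
proof -
  define u1 u2 v1 v2 where "u1 = 1 + z1" and "u2 = 1 - z1" and "v1 = 1 + z2" and "v2 = 1 - z2"
  have u: "0 < u1" "0 < u2" "0 < v1" "0 < v2" using z by (auto simp: u1_def u2_def v1_def v2_def)
  define g where "g \<mu> = ln (exp \<mu> * u1 + u2) - ln (exp \<mu> * v1 + v2)" for \<mu>
  have deriv: "(g has_field_derivative
          (exp \<mu> * u1 / (exp \<mu> * u1 + u2) - exp \<mu> * v1 / (exp \<mu> * v1 + v2))) (at \<mu> within UNIV)" for \<mu>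
    unfolding g_def using u
    by (auto intro!: derivative_eq_intros add_pos_pos simp: field_simps)
  have bound: "norm (exp \<mu> * u1 / (exp \<mu> * u1 + u2) - exp \<mu> * v1 / (exp \<mu> * v1 + v2))
      \<le> hilbert_q u1 u2 v1 v2" for \<mu>
    using hilbert_q_deriv_bound[OF u] by simp
  have lip: "norm (g \<mu> - g 0) \<le> hilbert_q u1 u2 v1 v2 * norm (\<mu> - 0)" for \<mu>
    by (rule field_differentiable_bound[OF convex_UNIV deriv bound]) auto
  \<comment> \<open>at \<open>\<mu> = 2 artanh a\<close> the difference \<open>g \<mu>\<close> is the one of the claim\<close>
  define \<mu> where "\<mu> = ln ((1 + a) / (1 - a))"
  have a': "0 < 1 + a" "0 < 1 - a" using a by auto
  have pos: "0 < 1 + a * z1" "0 < 1 + a * z2"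
    using one_plus_mult_pos a z by (simp_all add: less_imp_le)
  have arg: "exp \<mu> * u1 + u2 = 2 * (1 + a * z1) / (1 - a)"
    "exp \<mu> * v1 + v2 = 2 * (1 + a * z2) / (1 - a)"
    using a' by (simp_all add: \<mu>_def u1_def u2_def v1_def v2_def field_simps)
  have ln_split: "ln (2 * X / (1 - a)) = ln 2 + ln X - ln (1 - a)" if "0 < X" for X
    using that a' by (simp add: ln_div ln_mult)
  have "g \<mu> = ln (1 + a * z1) - ln (1 + a * z2)"
    unfolding g_def arg ln_split[OF pos(1)] ln_split[OF pos(2)] by simp
  moreover have "g 0 = 0" by (simp add: g_def u1_def u2_def v1_def v2_def)
  moreover have "\<bar>\<mu>\<bar> = d_hyp a 0" by (simp add: \<mu>_def d_hyp_def artanh_def)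
  ultimately show ?thesis
    using lip[of \<mu>] by (simp add: disc_q_def u1_def u2_def v1_def v2_def mult.commute)
qed

section \<open>The operator T\<close>

locale weighted_chain =
  fixes C :: "'r set" and Q :: "'r \<Rightarrow> 'r \<Rightarrow> real" and p :: "'r \<Rightarrow> real"
  assumes finite_C: "finite C"
    and Q_nonneg: "\<And>r s. r \<in> C \<Longrightarrow> s \<in> C \<Longrightarrow> 0 \<le> Q r s"
    and Q_row_sum: "\<And>r. r \<in> C \<Longrightarrow> (\<Sum>s\<in>C. Q r s) = 1"
    and p_pos: "\<And>r. r \<in> C \<Longrightarrow> 0 < p r"
begin

definition reversed_avg :: "('r \<Rightarrow> real) \<Rightarrow> 'r \<Rightarrow> real" where
  "reversed_avg h s = (\<Sum>r\<in>C. p r * Q r s / p s * h r)"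

lemma reversed_avg_weight_nonneg: "r \<in> C \<Longrightarrow> s \<in> C \<Longrightarrow> 0 \<le> p r * Q r s / p s"
  using p_pos Q_nonneg by (simp add: less_imp_le)

lemma reversed_avg_diff: "reversed_avg (\<lambda>r. h r - g r) s = reversed_avg h s - reversed_avg g s"
  by (simp add: reversed_avg_def right_diff_distrib sum_subtractf)

lemma reversed_avg_mult_right: "reversed_avg (\<lambda>r. h r * c) s = reversed_avg h s * c"
  by (simp add: reversed_avg_def sum_distrib_right mult.assoc)

lemma reversed_avg_nonneg: "s \<in> C \<Longrightarrow> (\<And>r. r \<in> C \<Longrightarrow> 0 \<le> h r) \<Longrightarrow> 0 \<le> reversed_avg h s"
  unfolding reversed_avg_def by (intro sum_nonneg mult_nonneg_nonneg reversed_avg_weight_nonneg)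

lemma reversed_avg_iter_nonneg:
  "s \<in> C \<Longrightarrow> (\<And>r. r \<in> C \<Longrightarrow> 0 \<le> h r) \<Longrightarrow> 0 \<le> (reversed_avg ^^ k) h s"
  by (induction k arbitrary: s) (simp_all add: reversed_avg_nonneg)

lemma abs_reversed_avg_le:
  assumes "s \<in> C" and "\<And>r. r \<in> C \<Longrightarrow> \<bar>h r\<bar> \<le> g r"
  shows "\<bar>reversed_avg h s\<bar> \<le> reversed_avg g s"
proof -
  have "\<bar>reversed_avg h s\<bar> \<le> (\<Sum>r\<in>C. \<bar>p r * Q r s / p s * h r\<bar>)"
    unfolding reversed_avg_def by (rule sum_abs)
  also have "\<dots> \<le> reversed_avg g s"
    unfolding reversed_avg_def
  proof (intro sum_mono)
    fix r assume r: "r \<in> C"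
    have "\<bar>p r * Q r s / p s * h r\<bar> = p r * Q r s / p s * \<bar>h r\<bar>"
      using reversed_avg_weight_nonneg[OF r assms(1)] by (metis abs_mult abs_of_nonneg)
    also have "\<dots> \<le> p r * Q r s / p s * g r"
      using assms(2)[OF r] reversed_avg_weight_nonneg[OF r assms(1)] by (rule mult_left_mono)
    finally show "\<bar>p r * Q r s / p s * h r\<bar> \<le> p r * Q r s / p s * g r" .
  qed
  finally show ?thesis .
qed

lemma weighted_sum_reversed_avg: "(\<Sum>s\<in>C. p s * reversed_avg h s) = (\<Sum>r\<in>C. p r * h r)"
proof -
  have "(\<Sum>s\<in>C. p s * reversed_avg h s) = (\<Sum>s\<in>C. \<Sum>r\<in>C. p r * h r * Q r s)"
    unfolding reversed_avg_def sum_distrib_left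
    by (intro sum.cong refl) (use p_pos in \<open>simp add: less_imp_neq[symmetric]\<close>)
  also have "\<dots> = (\<Sum>r\<in>C. p r * h r * (\<Sum>s\<in>C. Q r s))"
    by (subst sum.swap) (simp add: sum_distrib_left)
  also have "\<dots> = (\<Sum>r\<in>C. p r * h r)" by (simp add: Q_row_sum)
  finally show ?thesis .
qed

lemma weighted_sum_reversed_avg_iter: "(\<Sum>s\<in>C. p s * (reversed_avg ^^ k) h s) = (\<Sum>r\<in>C. p r * h r)"
  by (induction k) (simp_all add: weighted_sum_reversed_avg)

lemma V_genfun_reversed_avg:
  assumes "\<And>r. r \<in> C \<Longrightarrow> V_genfun (u r) (\<Phi> r)"
  shows "V_genfun (\<lambda>n. reversed_avg (\<lambda>r. u r n) s) (\<lambda>z. reversed_avg (\<lambda>r. \<Phi> r z) s)"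
  unfolding reversed_avg_def using finite_C assms by (intro V_genfun_sum V_genfun_scale)

lemma TT_eq_reversed_avg: "TT C Q p B u s = (\<lambda>k. reversed_avg (\<lambda>r. Top (B r) (u r) k) s)"
  by (simp add: TT_def reversed_avg_def)

lemma seed_eq_reversed_avg:
  "seed C Q p B s = (\<lambda>k. reversed_avg (\<lambda>r. vseq (mob_f (B r) 0) (mob_ell (B r) 0) k) s)"
  by (simp add: seed_def reversed_avg_def)

lemma bracket0_TT: "bracket0 C p (TT C Q p B u) = (\<Sum>r\<in>C. p r * Top (B r) (u r) 0)"
  by (simp add: bracket0_def TT_eq_reversed_avg weighted_sum_reversed_avg)

end

locale moebius_system = weighted_chain C Q p
  for C :: "'r set" and Q :: "'r \<Rightarrow> 'r \<Rightarrow> real" and p :: "'r \<Rightarrow> real" +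
  fixes B :: "'r \<Rightarrow> real^2^2" and \<rho> :: real
  assumes B_pos: "\<And>r. r \<in> C \<Longrightarrow> \<forall>i j. 0 < B r $ i $ j"
    and \<rho>_nonneg: "0 \<le> \<rho>" and \<rho>_le_1: "\<rho> \<le> 1"
    and f_bound: "\<And>r x. r \<in> C \<Longrightarrow> \<bar>x\<bar> \<le> 1 \<Longrightarrow> \<bar>mob_f (B r) x\<bar> \<le> \<rho>"
begin

primrec genfun :: "nat \<Rightarrow> 'r \<Rightarrow> real \<Rightarrow> real" where
  "genfun 0 s z = reversed_avg (\<lambda>r. ln (1 + mob_f (B r) 0 * z)) s"
| "genfun (Suc k) s z = reversed_avg (\<lambda>r. genfun k r (mob_fT (B r) z) - genfun k r (mob_fT (B r) 0)) s"

lemma hyp_weights_nonneg: "r \<in> C \<Longrightarrow> 0 \<le> (reversed_avg ^^ k) (\<lambda>r. d_hyp (mob_f (B r) 0) 0) r"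
  by (rule reversed_avg_iter_nonneg) (simp_all add: d_hyp_def)

lemma genfun_at_0: "genfun k s 0 = 0"
  by (cases k) (simp_all add: reversed_avg_def)

lemma V_genfun_TT_iter:
  "s \<in> C \<Longrightarrow> V_genfun ((TT C Q p B ^^ k) (seed C Q p B) s) (genfun k s)"
proof (induction k arbitrary: s)
  case 0
  have "\<bar>mob_f (B r) 0\<bar> < 1" if "r \<in> C" for r
    using mob_f_abs_less_1[OF B_pos[OF that]] by simp
  thus ?case
    unfolding funpow_0 seed_eq_reversed_avg genfun.simps
    by (intro V_genfun_reversed_avg V_genfun_vseq)
next
  case (Suc k)
  have "V_genfun (Top (B r) ((TT C Q p B ^^ k) (seed C Q p B) r))
          (\<lambda>z. genfun k r (mob_fT (B r) z) - genfun k r (mob_fT (B r) 0))" if "r \<in> C" for r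
    using Top_V_genfun[OF Suc.IH[OF that] B_pos[OF that]] by blast
  thus ?case
    unfolding funpow.simps comp_def TT_eq_reversed_avg genfun.simps
    by (intro V_genfun_reversed_avg)
qed

lemma bracket0_TT_iter_Suc:
  "bracket0 C p ((TT C Q p B ^^ Suc k) (seed C Q p B)) = (\<Sum>r\<in>C. p r * genfun k r (mob_fT (B r) 0))"
  unfolding funpow.simps comp_def bracket0_TT
  using Top_V_genfun[OF V_genfun_TT_iter B_pos] by (intro sum.cong) auto

lemma genfun_lipschitz:
  assumes "s \<in> C" and "\<bar>z1\<bar> < 1" and "\<bar>z2\<bar> < 1"
  shows "\<bar>genfun k s z1 - genfun k s z2\<bar>
           \<le> \<rho> ^ k * (reversed_avg ^^ Suc k) (\<lambda>r. d_hyp (mob_f (B r) 0) 0) s * disc_q z1 z2"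
  using assms
proof (induction k arbitrary: s z1 z2)
  case 0
  have "\<bar>ln (1 + mob_f (B r) 0 * z1) - ln (1 + mob_f (B r) 0 * z2)\<bar> \<le> d_hyp (mob_f (B r) 0) 0 * disc_q z1 z2"
    if "r \<in> C" for r
    using ln_one_plus_mult_lipschitz mob_f_abs_less_1[OF B_pos[OF that], of 0] 0 by simp
  hence "\<bar>reversed_avg (\<lambda>r. ln (1 + mob_f (B r) 0 * z1) - ln (1 + mob_f (B r) 0 * z2)) s\<bar>
      \<le> reversed_avg (\<lambda>r. d_hyp (mob_f (B r) 0) 0 * disc_q z1 z2) s"
    using 0 by (intro abs_reversed_avg_le)
  thus ?case by (simp add: reversed_avg_diff reversed_avg_mult_right)
next
  case (Suc k)
  define W where "W = (reversed_avg ^^ Suc k) (\<lambda>r. d_hyp (mob_f (B r) 0) 0)"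
  have "\<bar>genfun k r (mob_fT (B r) z1) - genfun k r (mob_fT (B r) z2)\<bar>
      \<le> W r * \<rho> ^ Suc k * disc_q z1 z2" if r: "r \<in> C" for r
  proof -
    have B: "\<forall>i j. 0 < B r $ i $ j" using B_pos[OF r] .
    have W: "0 \<le> \<rho> ^ k * W r"
      unfolding W_def by (intro mult_nonneg_nonneg zero_le_power \<rho>_nonneg hyp_weights_nonneg r)
    have "\<bar>genfun k r (mob_fT (B r) z1) - genfun k r (mob_fT (B r) z2)\<bar>
        \<le> \<rho> ^ k * W r * disc_q (mob_fT (B r) z1) (mob_fT (B r) z2)"
      unfolding W_def using Suc mob_fT_abs_less_1[OF B] r by simp
    also have "\<dots> \<le> \<rho> ^ k * W r * (\<rho> * disc_q z1 z2)"
      using disc_q_mob_fT_contraction[OF B \<rho>_le_1 f_bound f_bound] r Suc.prems W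
      by (intro mult_left_mono) auto
    finally show ?thesis by (simp add: mult_ac)
  qed
  hence "\<bar>reversed_avg (\<lambda>r. genfun k r (mob_fT (B r) z1) - genfun k r (mob_fT (B r) z2)) s\<bar>
      \<le> reversed_avg (\<lambda>r. W r * (\<rho> ^ Suc k * disc_q z1 z2)) s"
    using Suc.prems by (intro abs_reversed_avg_le) (simp_all add: mult.assoc)
  thus ?case
    unfolding genfun.simps reversed_avg_mult_right reversed_avg_diff[symmetric] W_def
    by (simp add: mult_ac)
qed

lemma bracket0_TT_iter_Suc_bound:
  "\<bar>bracket0 C p ((TT C Q p B ^^ Suc k) (seed C Q p B))\<bar>
     \<le> Max ((\<lambda>r. \<bar>mob_fT (B r) 0\<bar> / (1 + sqrt (1 - \<bar>mob_fT (B r) 0\<bar>\<^sup>2))) ` C)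
       * (\<Sum>r\<in>C. p r * d_hyp (mob_f (B r) 0) 0) * \<rho> ^ k"
proof -
  define M where "M = Max ((\<lambda>r. \<bar>mob_fT (B r) 0\<bar> / (1 + sqrt (1 - \<bar>mob_fT (B r) 0\<bar>\<^sup>2))) ` C)"
  define W where "W = (reversed_avg ^^ Suc k) (\<lambda>r. d_hyp (mob_f (B r) 0) 0)"
  have "\<bar>p r * genfun k r (mob_fT (B r) 0)\<bar> \<le> p r * W r * (\<rho> ^ k * M)" if r: "r \<in> C" for r
  proof -
    have a: "\<bar>mob_fT (B r) 0\<bar> < 1" using mob_fT_abs_less_1[OF B_pos[OF r]] by simp
    have "\<bar>genfun k r (mob_fT (B r) 0)\<bar> = \<bar>genfun k r (mob_fT (B r) 0) - genfun k r 0\<bar>"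
      by (simp add: genfun_at_0)
    also have "\<dots> \<le> \<rho> ^ k * W r * disc_q (mob_fT (B r) 0) 0"
      unfolding W_def using genfun_lipschitz r a by simp
    also have "\<dots> \<le> \<rho> ^ k * W r * M"
      unfolding disc_q_0[OF a] M_def using r finite_C \<rho>_nonneg hyp_weights_nonneg[OF r, of "Suc k"]
      by (intro mult_left_mono Max_ge) (auto simp: W_def)
    finally show ?thesis
      using p_pos[OF r] by (simp add: abs_mult mult_left_mono mult_ac)
  qed
  hence "\<bar>\<Sum>r\<in>C. p r * genfun k r (mob_fT (B r) 0)\<bar> \<le> (\<Sum>r\<in>C. p r * W r) * (\<rho> ^ k * M)"
    unfolding sum_distrib_right by (intro order_trans[OF sum_abs] sum_mono)
  thus ?thesis
    unfolding bracket0_TT_iter_Suc W_def weighted_sum_reversed_avg_iter M_def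
    by (simp add: mult_ac)
qed

end

section \<open>The tail estimate\<close>

lemma geometric_tail_bound:
  fixes b :: "nat \<Rightarrow> real"
  assumes \<rho>: "0 \<le> \<rho>" "\<rho> < 1" and b: "\<And>k. \<bar>b (Suc k)\<bar> \<le> K * \<rho> ^ k" and n: "1 \<le> n"
  shows "summable b" and "\<bar>(\<Sum>k. b k) - (\<Sum>k<n. b k)\<bar> \<le> K / (1 - \<rho>) * \<rho> ^ (n - 1)"
proof -
  obtain m where m: "n = Suc m" using n by (cases n) auto
  have geom: "(\<lambda>j. c * \<rho> ^ j) sums (c / (1 - \<rho>))" for c
    using \<rho> sums_mult[OF geometric_sums, of \<rho> c] by simp
  have tail: "\<bar>b (j + n)\<bar> \<le> K * \<rho> ^ m * \<rho> ^ j" for j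
    using b[of "j + m"] by (simp add: m power_add mult_ac)
  have abs_tail: "summable (\<lambda>j. \<bar>b (j + n)\<bar>)"
    by (rule summable_comparison_test'[OF sums_summable[OF geom]]) (use tail in simp)
  hence "summable (\<lambda>j. b (j + n))" by (rule summable_rabs_cancel)
  thus "summable b" by (rule summable_iff_shift[THEN iffD1])
  hence "(\<Sum>k. b k) - (\<Sum>k<n. b k) = (\<Sum>j. b (j + n))"
    by (rule suminf_minus_initial_segment[symmetric])
  hence "\<bar>(\<Sum>k. b k) - (\<Sum>k<n. b k)\<bar> \<le> (\<Sum>j. \<bar>b (j + n)\<bar>)"
    using summable_rabs[OF abs_tail] by simp
  also have "\<dots> \<le> (\<Sum>j. K * \<rho> ^ m * \<rho> ^ j)"
    by (rule suminf_le[OF tail abs_tail sums_summable[OF geom]])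
  also have "\<dots> = K * \<rho> ^ m / (1 - \<rho>)"
    by (rule sums_unique[OF geom, symmetric])
  also have "\<dots> = K / (1 - \<rho>) * \<rho> ^ (n - 1)"
    by (simp add: m)
  finally show "\<bar>(\<Sum>k. b k) - (\<Sum>k<n. b k)\<bar> \<le> K / (1 - \<rho>) * \<rho> ^ (n - 1)" .
qed

theorem proposition4p1:
  fixes C :: "'r set" and Q :: "'r \<Rightarrow> 'r \<Rightarrow> real" and p :: "'r \<Rightarrow> real"
    and B :: "'r \<Rightarrow> real^2^2" and \<rho> :: real and n :: nat
  assumes "finite C" and "C \<noteq> {}"
    and "\<forall>r\<in>C. \<forall>r'\<in>C. Q r r' \<ge> 0"
    and "\<forall>r\<in>C. (\<Sum>r'\<in>C. Q r r') = 1"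
    and "irreducible_on C Q" and "aperiodic_on C Q"
    and "\<forall>r\<in>C. p r > 0" and "(\<Sum>r\<in>C. p r) = 1"
    and "\<forall>r'\<in>C. (\<Sum>r\<in>C. p r * Q r r') = p r'"
    and "\<forall>r\<in>C. \<forall>i j. B r $ i $ j > 0"
    and "\<forall>r\<in>C. det (B r) \<noteq> 0"
    and "0 < \<rho>" and "\<rho> < 1"
    and "\<forall>r\<in>C. \<forall>x. -1 \<le> x \<and> x \<le> 1 \<longrightarrow> \<bar>mob_f (B r) x\<bar> \<le> \<rho>"
    and "n \<ge> 1"
  shows "summable (\<lambda>k. bracket0 C p ((TT C Q p B ^^ k) (seed C Q p B)))
     \<and> \<bar>(\<Sum>k. bracket0 C p ((TT C Q p B ^^ k) (seed C Q p B)))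
          - (\<Sum>k<n. bracket0 C p ((TT C Q p B ^^ k) (seed C Q p B)))\<bar>
        \<le> E_C C p B \<rho> * \<rho> ^ (n - 1)"
proof -
  interpret moebius_system C Q p B \<rho>
    using assms(1,3,4,7,10,12,13,14) by unfold_locales (auto simp: abs_le_iff)
  have "\<bar>bracket0 C p ((TT C Q p B ^^ Suc k) (seed C Q p B))\<bar>
          \<le> (1 - \<rho>) * E_C C p B \<rho> * \<rho> ^ k" for k
    using bracket0_TT_iter_Suc_bound[of k] assms(13) by (simp add: E_C_def)
  from geometric_tail_bound[OF \<rho>_nonneg assms(13) this assms(15)] assms(13)
  show ?thesis by simp
qed

end
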